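(* Let $\mathcal{C}$ be a $d$-uniform properly-connected hypergraph on $V$ and $F$ an edge of $\mathcal{C}$. Then: (i) an edge $C$ of $\mathcal{C}$ is an edge of $\mathcal{C}:F$ if and only if $\operatorname{dist}_{\mathcal{C}}(F,C)\ge d+1$; (ii) $\mathcal{C}:F=\mathcal{C}_{V\setminus(F\cup N_{\mathcal{C}}(F))}$; (iii) the edge set of $\mathcal{C}:F$ equals $\mathcal{C}^{\ge}=\{G\in\mathcal{C}: \operatorname{dist}_{\mathcal{C}}(F,G)\ge d+1\}$; (iv) $\operatorname{c}_{\mathcal{C}}\ge \operatorname{c}_{\mathcal{C}:F}+1$, where $\operatorname{c}_{\mathcal{D}}$ denotes the maximum number of pairwise $(d+1)$-disjoint edges of $\mathcal{D}$.
   Context: A hypergraph $\mathcal{C}$ on a finite vertex set $V$ is a family of pairwise incomparable subsets of $V$ (its edges), each of cardinality at least $2$; it is $d$-uniform if every edge has $d$ elements. For an edge $F$: $N_{\mathcal{C}}(F)=\bigcup\{E\setminus F : E\in\mathcal{C},\ |E\setminus F|=1\}$, and $\mathcal{C}:F$ is the hypergraph on $V\setminus(F\cup N_{\mathcal{C}}(F))$ whose edges are the members of cardinality at least $2$ among the inclusion-minimal members of $\{E\setminus F: E\in\mathcal{C},E\neq F\}$. For $A\subseteq V$, $\mathcal{C}_A=\{E\in\mathcal{C}: E\subseteq A\}$ is the induced subhypergraph on $A$. Given edges $F,G$ with $|F|\ge |G|$, a proper chain from $F$ to $G$ is a sequence $(E_0=F,x_1,E_1,x_2,\dots,x_n,E_n=G)$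 with distinct vertices $x_i$ and distinct edges $E_j$ such that $x_1\in E_0$, $x_n\in E_n$, $x_k,x_{k+1}\in E_k$ for $k=1,\dots,n-1$, and $|E_i\cap E_{i+1}|=|E_{i+1}|-1$ for $i=0,\dots,n-1$; its length is $n$. It is irredundant if no subsequence of it is a proper chain from $F$ to $G$. The distance $\operatorname{dist}_{\mathcal{C}}(F,G)$ is the minimum length of a proper irredundant chain from $F$ to $G$ ($\infty$ if none). A $d$-uniform hypergraph is properly-connected if $\operatorname{dist}_{\mathcal{C}}(F,G)=d-|F\cap G|$ for any two edges with $F\cap G\neq\emptyset$. A set of edges is pairwise $t$-disjoint if any two of its distinct members have distance at least $t$ (distances in (iv) for $\mathcal{C}:F$ are taken in $\mathcal{C}:F$). *)

theory Defs
  imports Main "HOL-Library.Extended_Nat" "HOL-Library.Sublist"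
begin

definition hypergraph :: "'a set \<Rightarrow> 'a set set \<Rightarrow> bool" where
  "hypergraph V C \<longleftrightarrow> finite V \<and> (\<forall>E\<in>C. E \<subseteq> V \<and> 2 \<le> card E)
     \<and> (\<forall>E\<in>C. \<forall>G\<in>C. E \<subseteq> G \<longrightarrow> E = G)"

definition uniform :: "'a set set \<Rightarrow> nat \<Rightarrow> bool" where
  "uniform C d \<longleftrightarrow> (\<forall>E\<in>C. card E = d)"

definition nbhd :: "'a set set \<Rightarrow> 'a set \<Rightarrow> 'a set" where
  "nbhd C F = \<Union>{E - F | E. E \<in> C \<and> card (E - F) = 1}"

text \<open>Edge set of C:F (its vertex set is V - (F \<union> nbhd C F)).\<close>
definition colon :: "'a set set \<Rightarrow> 'a set \<Rightarrow> 'a set set" where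
  "colon C F = (let M = {E - F | E. E \<in> C \<and> E \<noteq> F} in
     {H. H \<in> M \<and> (\<forall>K\<in>M. K \<subseteq> H \<longrightarrow> K = H) \<and> 2 \<le> card H})"

definition induced :: "'a set set \<Rightarrow> 'a set \<Rightarrow> 'a set set" where
  "induced C A = {E \<in> C. E \<subseteq> A}"

text \<open>A chain (E_0, x_1, E_1, ..., x_n, E_n) is represented by the list Es = [E_0,...,E_n]
  and the list xs = [x_1,...,x_n] (so x_k = xs!(k-1)). The case n = 0 is the trivial chain (F).\<close>
definition proper_chain :: "'a set set \<Rightarrow> 'a set \<Rightarrow> 'a set \<Rightarrow> 'a set list \<Rightarrow> 'a list \<Rightarrow> bool" where
  "proper_chain C F G Es xs \<longleftrightarrow> (let n = length xs in
     length Es = n + 1 \<and> Es ! 0 = F \<and> Es ! n = G \<and> card G \<le> card F \<and>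
     set Es \<subseteq> C \<and> distinct Es \<and> distinct xs \<and>
     (n \<ge> 1 \<longrightarrow> xs ! 0 \<in> Es ! 0 \<and> xs ! (n - 1) \<in> Es ! n) \<and>
     (\<forall>k. 1 \<le> k \<and> k \<le> n - 1 \<longrightarrow> xs ! (k - 1) \<in> Es ! k \<and> xs ! k \<in> Es ! k) \<and>
     (\<forall>i < n. card (Es ! i \<inter> Es ! (i + 1)) = card (Es ! (i + 1)) - 1))"

fun chain_seq :: "'a set list \<Rightarrow> 'a list \<Rightarrow> ('a set + 'a) list" where
  "chain_seq (E # Es) (x # xs) = Inl E # Inr x # chain_seq Es xs"
| "chain_seq Es [] = map Inl Es"
| "chain_seq [] xs = map Inr xs"

definition irredundant :: "'a set set \<Rightarrow> 'a set \<Rightarrow> 'a set \<Rightarrow> 'a set list \<Rightarrow> 'a list \<Rightarrow> bool" where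
  "irredundant C F G Es xs \<longleftrightarrow>
     \<not> (\<exists>Es' xs'. proper_chain C F G Es' xs' \<and> strict_subseq (chain_seq Es' xs') (chain_seq Es xs))"

definition hdist :: "'a set set \<Rightarrow> 'a set \<Rightarrow> 'a set \<Rightarrow> enat" where
  "hdist C F G = (INF xs \<in> {xs. \<exists>Es. proper_chain C F G Es xs \<and> irredundant C F G Es xs}.
                     enat (length xs))"

definition properly_connected :: "'a set set \<Rightarrow> nat \<Rightarrow> bool" where
  "properly_connected C d \<longleftrightarrow> uniform C d \<and>
     (\<forall>F\<in>C. \<forall>G\<in>C. F \<inter> G \<noteq> {} \<longrightarrow> hdist C F G = enat (d - card (F \<inter> G)))"

definition pairwise_disjoint_t :: "'a set set \<Rightarrow> nat \<Rightarrow> 'a set set \<Rightarrow> bool" where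
  "pairwise_disjoint_t D t S \<longleftrightarrow> (\<forall>E\<in>S. \<forall>G\<in>S. E \<noteq> G \<longrightarrow> hdist D E G \<ge> enat t)"

definition cnum :: "'a set set \<Rightarrow> nat \<Rightarrow> nat" where
  "cnum D d = Max {card S | S. S \<subseteq> D \<and> pairwise_disjoint_t D (d + 1) S}"

end

theory Submission
  imports Defs
begin

text \<open>Consecutive edges of a proper chain in a uniform hypergraph differ in exactly one vertex, so
  a chain from E to G has length at least |G - E|, and a chain of exactly that length (a geodesic)
  never leaves E \<union> G. In a properly connected hypergraph intersecting edges, and edges at
  distance at most d, are joined by geodesics.

  Hence an edge G is within distance d of F iff it meets F \<union> N(F): the edge X following F on
  a geodesic to a disjoint G satisfies X - F = {w} with w \<in> G \<inter> N(F); conversely, if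
  v \<in> G \<inter> N(F) and E - F = {v}, then F followed by a geodesic from E to G has length at most d.
  The same geodesic argument shows that E - F contains a vertex w of N(F) whenever E meets F,
  and then the singleton {w} is a smaller member of the family defining C:F; so the edges of
  C:F are exactly the edges avoiding F \<union> N(F). Finally, geodesics between such edges stay
  among them, so a pairwise (d+1)-disjoint family of C:F is pairwise (d+1)-disjoint in C and
  stays so after adding F.\<close>

section \<open>Proper chains and distance\<close>

text \<open>The vertex conditions in the definition of a proper chain say exactly that each x_(i+1) lies
  in E_i \<inter> E_(i+1).\<close>

lemma proper_chainD:
  assumes "proper_chain C F G Es xs"
  shows "length Es = length xs + 1" "Es ! 0 = F" "Es ! length xs = G" "card G \<le> card F"
    "set Es \<subseteq> C" "distinct Es" "distinct xs"
    and proper_chain_vertex: "i < length xs \<Longrightarrow> xs ! i \<in> Es ! i \<inter> Es ! Suc i"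
    and proper_chain_card_Int:
      "i < length xs \<Longrightarrow> card (Es ! i \<inter> Es ! Suc i) = card (Es ! Suc i) - 1"
proof -
  let ?n = "length xs"
  note chain = assms[unfolded proper_chain_def Let_def]
  show "length Es = ?n + 1" "Es ! 0 = F" "Es ! ?n = G" "card G \<le> card F"
    "set Es \<subseteq> C" "distinct Es" "distinct xs"
    using chain by auto
  show "i < ?n \<Longrightarrow> card (Es ! i \<inter> Es ! Suc i) = card (Es ! Suc i) - 1"
    using chain by simp
  assume "i < ?n"
  have "xs ! i \<in> Es ! i"
    using chain \<open>i < ?n\<close> by (cases "i = 0") auto
  moreover have "xs ! i \<in> Es ! Suc i"
  proof (cases "i = ?n - 1")
    case True
    with \<open>i < ?n\<close> have "Suc i = ?n" by simp
    moreover have "xs ! i \<in> Es ! ?n"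
      using chain True \<open>i < ?n\<close> by auto
    ultimately show ?thesis by simp
  next
    case False
    with \<open>i < ?n\<close> have "1 \<le> Suc i \<and> Suc i \<le> ?n - 1" by simp
    with chain have "xs ! (Suc i - 1) \<in> Es ! Suc i" by blast
    then show ?thesis by simp
  qed
  ultimately show "xs ! i \<in> Es ! i \<inter> Es ! Suc i" by blast
qed

lemma proper_chainI:
  assumes "length Es = length xs + 1" "Es ! 0 = F" "Es ! length xs = G" "card G \<le> card F"
    "set Es \<subseteq> C" "distinct Es" "distinct xs"
    and vertex: "\<And>i. i < length xs \<Longrightarrow> xs ! i \<in> Es ! i \<inter> Es ! Suc i"
    and "\<And>i. i < length xs \<Longrightarrow> card (Es ! i \<inter> Es ! Suc i) = card (Es ! Suc i) - 1"
  shows "proper_chain C F G Es xs"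
proof -
  let ?n = "length xs"
  have "?n \<ge> 1 \<longrightarrow> xs ! 0 \<in> Es ! 0 \<and> xs ! (?n - 1) \<in> Es ! ?n"
  proof
    assume "?n \<ge> 1"
    then have "Suc (?n - 1) = ?n" by simp
    then show "xs ! 0 \<in> Es ! 0 \<and> xs ! (?n - 1) \<in> Es ! ?n"
      using vertex[of 0] vertex[of "?n - 1"] \<open>?n \<ge> 1\<close> by fastforce
  qed
  moreover have "\<forall>k. 1 \<le> k \<and> k \<le> ?n - 1 \<longrightarrow> xs ! (k - 1) \<in> Es ! k \<and> xs ! k \<in> Es ! k"
  proof (intro allI impI)
    fix k assume k: "1 \<le> k \<and> k \<le> ?n - 1"
    then have "Suc (k - 1) = k" "k - 1 < ?n" "k < ?n" by auto
    then show "xs ! (k - 1) \<in> Es ! k \<and> xs ! k \<in> Es ! k"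
      using vertex[of "k - 1"] vertex[of k] by auto
  qed
  moreover have "\<forall>i<?n. card (Es ! i \<inter> Es ! Suc i) = card (Es ! Suc i) - 1"
    using assms(9) by simp
  ultimately show ?thesis
    using assms(1-7) unfolding proper_chain_def Let_def Suc_eq_plus1 by (intro conjI) assumption+
qed

lemma proper_chain_nth_mem:
  assumes "proper_chain C F G Es xs" "i \<le> length xs"
  shows "Es ! i \<in> C"
proof -
  have "Es ! i \<in> set Es"
    using assms proper_chainD(1)[OF assms(1)] by simp
  then show ?thesis
    using proper_chainD(5)[OF assms(1)] by blast
qed

lemma proper_chain_subfamily:
  "proper_chain C F G Es xs \<Longrightarrow> set Es \<subseteq> C' \<Longrightarrow> proper_chain C' F G Es xs"
  unfolding proper_chain_def Let_def by (elim conjE) (intro conjI; assumption)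

lemma proper_chain_Cons:
  assumes chain: "proper_chain C E G Es xs"
    and "F \<in> C" "F \<notin> set Es" "x \<in> F \<inter> E" "x \<notin> set xs"
    and "card (F \<inter> E) = card E - 1" "card G \<le> card F"
  shows "proper_chain C F G (F # Es) (x # xs)"
proof (rule proper_chainI)
  note c = proper_chainD[OF chain]
  show "length (F # Es) = length (x # xs) + 1" "(F # Es) ! 0 = F"
    "(F # Es) ! length (x # xs) = G" "card G \<le> card F" "set (F # Es) \<subseteq> C"
    "distinct (F # Es)" "distinct (x # xs)"
    using assms c by auto
  fix i assume "i < length (x # xs)"
  then show "(x # xs) ! i \<in> (F # Es) ! i \<inter> (F # Es) ! Suc i"
    and "card ((F # Es) ! i \<inter> (F # Es) ! Suc i) = card ((F # Es) ! Suc i) - 1"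
    using assms c by (auto simp: nth_Cons split: nat.split)
qed

lemma card_set_Int_less_length:
  assumes "distinct ys" "ys \<noteq> []" "last ys \<notin> A"
  shows "card (set ys \<inter> A) < length ys"
proof -
  have "last ys \<in> set ys"
    using assms(2) by simp
  then have "set ys \<inter> A \<subset> set ys"
    using assms(3) by blast
  then have "card (set ys \<inter> A) < card (set ys)"
    by (simp add: psubset_card_mono)
  then show ?thesis
    using distinct_card[OF assms(1)] by simp
qed

lemma proper_chain_card_vertices_Int_less:
  assumes chain: "proper_chain C E G Es xs" and "G \<inter> A = {}" "xs \<noteq> []"
  shows "card (set xs \<inter> A) < length xs"
proof (rule card_set_Int_less_length)
  have "Suc (length xs - 1) = length xs"
    using assms(3) by simp
  then have "xs ! (length xs - 1) \<in> G"
    using proper_chain_vertex[OF chain, of "length xs - 1"] proper_chainD(3)[OF chain] assms(3)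
    by auto
  then show "last xs \<notin> A"
    using assms(2,3) by (auto simp: last_conv_nth)
qed (use assms proper_chainD(7)[OF chain] in auto)

lemma proper_chain_vertex_avoidable:
  assumes chain: "proper_chain C E G Es xs" and "G \<inter> F = {}" "finite F"
    and "F \<inter> E \<noteq> {}" "length xs \<le> card (F \<inter> E)"
  obtains x where "x \<in> F \<inter> E" "x \<notin> set xs"
proof -
  have "card (set xs \<inter> F) < card (F \<inter> E)"
  proof (cases "xs = []")
    case True
    then show ?thesis using assms(3,4) by (simp add: card_gt_0_iff)
  next
    case False
    then show ?thesis
      using proper_chain_card_vertices_Int_less[OF chain assms(2)] assms(5) by simp
  qed
  have "\<not> F \<inter> E \<subseteq> set xs"
  proof
    assume "F \<inter> E \<subseteq> set xs"
    then have "card (F \<inter> E) \<le> card (set xs \<inter> F)"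
      by (intro card_mono) auto
    with \<open>card (set xs \<inter> F) < card (F \<inter> E)\<close> show False
      by simp
  qed
  with that show ?thesis by blast
qed

lemma length_chain_seq:
  "length Es = length xs + 1 \<Longrightarrow> length (chain_seq Es xs) = 2 * length xs + 1"
proof (induction xs arbitrary: Es)
  case (Cons x xs)
  then show ?case by (cases Es) auto
qed simp

text \<open>A redundant chain contains a proper subchain, which is strictly shorter since the
  alternating sequence of a chain of length n has 2n + 1 entries.\<close>
lemma hdist_le_length: "proper_chain C F G Es xs \<Longrightarrow> hdist C F G \<le> enat (length xs)"
proof (induction "length xs" arbitrary: Es xs rule: less_induct)
  case less
  show ?case
  proof (cases "irredundant C F G Es xs")
    case True
    with less.prems show ?thesis
      unfolding hdist_def by (blast intro: INF_lower)
  next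
    case False
    then obtain Es' xs' where chain': "proper_chain C F G Es' xs'"
      and sub: "strict_subseq (chain_seq Es' xs') (chain_seq Es xs)"
      unfolding irredundant_def by blast
    have "length (chain_seq Es' xs') < length (chain_seq Es xs)"
      using sub unfolding strict_subseq_def
      by (metis list_emb_length order_le_neq_trans subseq_same_length)
    then have shorter: "length xs' < length xs"
      using proper_chainD(1)[OF chain'] proper_chainD(1)[OF less.prems]
      by (simp add: length_chain_seq)
    then have "hdist C F G \<le> enat (length xs')"
      using less.hyps chain' by blast
    also have "\<dots> \<le> enat (length xs)"
      using shorter by simp
    finally show ?thesis .
  qed
qed

lemma hdist_le_enatE:
  assumes "hdist C F G \<le> enat k"
  obtains Es xs where "proper_chain C F G Es xs" "length xs \<le> k"
proof -
  let ?L = "(\<lambda>xs. enat (length xs)) `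
    {xs. \<exists>Es. proper_chain C F G Es xs \<and> irredundant C F G Es xs}"
  have hdist_eq: "hdist C F G = Inf ?L"
    unfolding hdist_def ..
  have "?L \<noteq> {}"
  proof
    assume "?L = {}"
    then have "hdist C F G = \<infinity>"
      unfolding hdist_eq by (simp only: Inf_empty top_enat_def)
    with assms show False by simp
  qed
  then have "hdist C F G \<in> ?L"
    unfolding hdist_eq Inf_enat_def by (metis (no_types, lifting) LeastI_ex ex_in_conv)
  with assms that show ?thesis by auto
qed

lemma enat_add_one_le_iff: "enat (d + 1) \<le> h \<longleftrightarrow> \<not> h \<le> enat d"
  by (simp add: Suc_ile_eq not_le)

section \<open>Sequences of sets growing by at most one element per step\<close>

lemma card_Int_split:
  "finite Y \<Longrightarrow> card (Y \<inter> A) = card (X \<inter> Y \<inter> A) + card ((Y - X) \<inter> A)"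
  by (subst card_Un_disjoint[symmetric]) (auto intro: arg_cong[where f = card])

lemma card_Int_step_le:
  assumes "finite X" "finite Y" "card (Y - X) \<le> 1"
  shows "card (Y \<inter> A) \<le> card (X \<inter> A) + 1"
proof -
  have "card (X \<inter> Y \<inter> A) \<le> card (X \<inter> A)"
    using assms(1) by (intro card_mono) auto
  moreover have "card ((Y - X) \<inter> A) \<le> card (Y - X)"
    using assms(2) by (intro card_mono) auto
  ultimately show ?thesis
    using card_Int_split[OF assms(2), of A X] assms(3) by linarith
qed

lemma card_Int_step_eq:
  assumes "finite X" "finite Y" "card (Y - X) \<le> 1"
    and grows: "card (Y \<inter> A) = card (X \<inter> A) + 1"
  shows "Y - X \<subseteq> A" "X \<inter> A \<subseteq> Y"
proof -
  have old: "card (X \<inter> Y \<inter> A) \<le> card (X \<inter> A)"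
    using assms(1) by (intro card_mono) auto
  have new: "card ((Y - X) \<inter> A) \<le> card (Y - X)"
    using assms(2) by (intro card_mono) auto
  have "card ((Y - X) \<inter> A) = card (Y - X)"
    using card_Int_split[OF assms(2), of A X] grows old new assms(3) by linarith
  then have "(Y - X) \<inter> A = Y - X"
    using assms(2) by (intro card_subset_eq) auto
  then show "Y - X \<subseteq> A" by blast
  have "card (X \<inter> Y \<inter> A) = card (X \<inter> A)"
    using card_Int_split[OF assms(2), of A X] grows old new assms(3) by linarith
  then have "X \<inter> Y \<inter> A = X \<inter> A"
    using assms(1) by (intro card_subset_eq) auto
  then show "X \<inter> A \<subseteq> Y" by blast
qed

locale unit_step_seq =
  fixes S :: "nat \<Rightarrow> 'a set" and n :: nat
  assumes finite_S: "i \<le> n \<Longrightarrow> finite (S i)"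
    and card_step: "i < n \<Longrightarrow> card (S (Suc i) - S i) \<le> 1"
begin

lemma card_Int_le_add:
  assumes "i \<le> j" "j \<le> n"
  shows "card (S j \<inter> A) \<le> card (S i \<inter> A) + (j - i)"
  using assms
proof (induction j rule: dec_induct)
  case (step j)
  have "card (S (Suc j) \<inter> A) \<le> card (S j \<inter> A) + 1"
    using step finite_S card_step by (intro card_Int_step_le) auto
  with step show ?case by simp
qed simp

lemma card_Diff_first_le: "card (S n - S 0) \<le> n"
proof -
  have "card (S n \<inter> S n) \<le> card (S 0 \<inter> S n) + n"
    using card_Int_le_add[of 0 n "S n"] by simp
  then show ?thesis
    using finite_S[of n] by (simp add: card_Diff_subset_Int Int_commute)
qed

text \<open>If S n gains n elements over S 0, every step must add an element of S n and keep the
  elements of S n already present.\<close>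

context
  assumes tight: "card (S n - S 0) = n"
begin

lemma card_Int_last:
  assumes "j \<le> n"
  shows "card (S j \<inter> S n) = card (S 0 \<inter> S n) + j"
proof -
  have "card (S n) = card (S 0 \<inter> S n) + n"
    using tight finite_S[of n] card_mono[of "S n" "S 0 \<inter> S n"]
    by (simp add: card_Diff_subset_Int Int_commute)
  moreover have "card (S n \<inter> S n) \<le> card (S j \<inter> S n) + (n - j)"
    using card_Int_le_add assms by blast
  moreover have "card (S j \<inter> S n) \<le> card (S 0 \<inter> S n) + j"
    using card_Int_le_add[of 0 j] assms by simp
  ultimately show ?thesis using assms by simp
qed

lemma tight_step:
  assumes "j < n"
  shows "S (Suc j) - S j \<subseteq> S n" "S j \<inter> S n \<subseteq> S (Suc j)"
  using card_Int_step_eq[OF finite_S finite_S card_step, of j "S n"] card_Int_last[of j]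
    card_Int_last[of "Suc j"] assms
  by auto

lemma subset_first_Un_last: "j \<le> n \<Longrightarrow> S j \<subseteq> S 0 \<union> S n"
proof (induction j)
  case (Suc j)
  then show ?case using tight_step(1)[of j] by auto
qed simp

lemma first_Int_last_subset: "j \<le> n \<Longrightarrow> S 0 \<inter> S n \<subseteq> S j"
proof (induction j)
  case (Suc j)
  then show ?case using tight_step(2)[of j] by auto
qed simp

end

end

section \<open>Geodesic chains\<close>

lemma proper_chain_card_step:
  assumes chain: "proper_chain C E G Es xs" and "\<forall>X\<in>C. finite X" "i < length xs"
  shows "card (Es ! Suc i - Es ! i) \<le> 1"
proof -
  have "finite (Es ! Suc i)"
    using assms proper_chain_nth_mem[OF chain, of "Suc i"] by auto
  then show ?thesis
    using proper_chain_card_Int[OF chain \<open>i < length xs\<close>]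
    by (simp add: card_Diff_subset_Int Int_commute)
qed

lemma proper_chain_unit_step_seq:
  assumes "proper_chain C E G Es xs" "\<forall>X\<in>C. finite X"
  shows "unit_step_seq ((!) Es) (length xs)"
proof
  show "finite (Es ! i)" if "i \<le> length xs" for i
    using assms proper_chain_nth_mem[OF assms(1) that] by blast
  show "card (Es ! Suc i - Es ! i) \<le> 1" if "i < length xs" for i
    using proper_chain_card_step[OF assms that] .
qed

lemma card_Diff_le_proper_chain_length:
  assumes chain: "proper_chain C E G Es xs" and "\<forall>X\<in>C. finite X"
  shows "card (G - E) \<le> length xs"
  using unit_step_seq.card_Diff_first_le[OF proper_chain_unit_step_seq[OF assms]]
  by (simp add: proper_chainD[OF chain])

lemma geodesic_subset_Un:
  assumes chain: "proper_chain C E G Es xs" and "\<forall>X\<in>C. finite X"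
    and "length xs = card (G - E)" "i \<le> length xs"
  shows "Es ! i \<subseteq> E \<union> G"
proof -
  interpret unit_step_seq "(!) Es" "length xs"
    using proper_chain_unit_step_seq[OF chain assms(2)] .
  have "card (Es ! length xs - Es ! 0) = length xs"
    using assms(3) proper_chainD(2,3)[OF chain] by simp
  then have "Es ! i \<subseteq> Es ! 0 \<union> Es ! length xs"
    using subset_first_Un_last assms(4) by blast
  then show ?thesis
    using proper_chainD(2,3)[OF chain] by simp
qed

lemma geodesic_Int_subset:
  assumes chain: "proper_chain C E G Es xs" and "\<forall>X\<in>C. finite X"
    and "length xs = card (G - E)" "i \<le> length xs"
  shows "E \<inter> G \<subseteq> Es ! i"
proof -
  interpret unit_step_seq "(!) Es" "length xs"
    using proper_chain_unit_step_seq[OF chain assms(2)] .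
  have "card (Es ! length xs - Es ! 0) = length xs"
    using assms(3) proper_chainD(2,3)[OF chain] by simp
  then have "Es ! 0 \<inter> Es ! length xs \<subseteq> Es ! i"
    using first_Int_last_subset assms(4) by blast
  then show ?thesis
    using proper_chainD(2,3)[OF chain] by simp
qed

lemma geodesicE:
  assumes "hdist C E G \<le> enat (card (G - E))" "\<forall>X\<in>C. finite X"
  obtains Es xs where "proper_chain C E G Es xs" "length xs = card (G - E)"
proof -
  obtain Es xs where chain: "proper_chain C E G Es xs" "length xs \<le> card (G - E)"
    using assms(1) by (rule hdist_le_enatE)
  with card_Diff_le_proper_chain_length[OF chain(1) assms(2)] that show ?thesis
    by simp
qed

lemma geodesic_edges_contain:
  assumes chain: "proper_chain C E G Es xs" and "\<forall>X\<in>C. finite X"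
    and "length xs = card (G - E)" "v \<in> E \<inter> G" "X \<in> set Es"
  shows "v \<in> X"
proof -
  obtain i where "i < length Es" "Es ! i = X"
    using assms(5) by (auto simp: in_set_conv_nth)
  then have "i \<le> length xs"
    using proper_chainD(1)[OF chain] by simp
  with \<open>Es ! i = X\<close> show ?thesis
    using geodesic_Int_subset[OF chain assms(2,3)] assms(4) by blast
qed

section \<open>Neighbourhoods, the hypergraph C:F and cnum\<close>

lemma mem_nbhd_iff: "w \<in> nbhd C F \<longleftrightarrow> (\<exists>E\<in>C. E - F = {w})"
proof
  assume "w \<in> nbhd C F"
  then obtain E where "E \<in> C" "card (E - F) = 1" "w \<in> E - F"
    unfolding nbhd_def by auto
  moreover obtain u where "E - F = {u}"
    using \<open>card (E - F) = 1\<close> by (rule card_1_singletonE)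
  ultimately have "E - F = {w}" by simp
  with \<open>E \<in> C\<close> show "\<exists>E\<in>C. E - F = {w}" by blast
next
  assume "\<exists>E\<in>C. E - F = {w}"
  then obtain E where "E \<in> C" "E - F = {w}" by blast
  then have "E - F \<in> {E - F | E. E \<in> C \<and> card (E - F) = 1}"
    by (intro CollectI exI[of _ E]) simp
  with \<open>E - F = {w}\<close> show "w \<in> nbhd C F"
    unfolding nbhd_def by blast
qed

lemma Diff_meets_nbhd:
  assumes "X \<in> C" "card (X - F) = 1" "X \<subseteq> F \<union> G"
  shows "(G - F) \<inter> nbhd C F \<noteq> {}"
proof -
  obtain w where w: "X - F = {w}"
    using assms(2) by (rule card_1_singletonE)
  then have "w \<in> nbhd C F"
    using assms(1) mem_nbhd_iff[of w C F] by blast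
  moreover have "w \<in> G - F"
  proof -
    have "w \<in> X"
      using w by blast
    with w assms(3) show ?thesis by blast
  qed
  ultimately show ?thesis by blast
qed

lemma mem_colon_iff:
  "H \<in> colon C F \<longleftrightarrow> (\<exists>E\<in>C. E \<noteq> F \<and> H = E - F)
     \<and> (\<forall>E\<in>C. E \<noteq> F \<longrightarrow> E - F \<subseteq> H \<longrightarrow> E - F = H) \<and> 2 \<le> card H"
  unfolding colon_def Let_def by blast

lemma cnum_attained:
  assumes "finite D"
  obtains S where "S \<subseteq> D" "pairwise_disjoint_t D (d + 1) S" "card S = cnum D d"
proof -
  let ?P = "{card S | S. S \<subseteq> D \<and> pairwise_disjoint_t D (d + 1) S}"
  have "finite ?P"
    using assms by (auto intro: finite_subset[of _ "card ` Pow D"])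
  moreover have "card {} \<in> ?P"
    by (intro CollectI exI[of _ "{}"]) (simp add: pairwise_disjoint_t_def)
  ultimately have "Max ?P \<in> ?P"
    by (intro Max_in) auto
  with that show ?thesis
    unfolding cnum_def by auto
qed

lemma card_le_cnum:
  assumes "finite D" "S \<subseteq> D" "pairwise_disjoint_t D (d + 1) S"
  shows "card S \<le> cnum D d"
proof -
  let ?P = "{card S | S. S \<subseteq> D \<and> pairwise_disjoint_t D (d + 1) S}"
  have "finite ?P"
    using assms by (auto intro: finite_subset[of _ "card ` Pow D"])
  moreover have "card S \<in> ?P"
    using assms by auto
  ultimately show ?thesis
    unfolding cnum_def by (rule Max_ge)
qed

locale properly_connected_hypergraph =
  fixes V :: "'a set" and C :: "'a set set" and d :: nat
  assumes hypergraph: "hypergraph V C" and properly_connected: "properly_connected C d"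
begin

lemma edge_subset: "E \<in> C \<Longrightarrow> E \<subseteq> V"
  using hypergraph by (simp add: hypergraph_def)

lemma finite_edges: "\<forall>E\<in>C. finite E"
  using hypergraph edge_subset by (meson hypergraph_def finite_subset)

lemma finite_C: "finite C"
  using hypergraph edge_subset by (meson hypergraph_def Pow_iff finite_Pow_iff finite_subset subsetI)

lemma edges_incomparable: "E \<in> C \<Longrightarrow> G \<in> C \<Longrightarrow> E \<subseteq> G \<Longrightarrow> E = G"
  using hypergraph by (simp add: hypergraph_def)

lemma card_edge: "E \<in> C \<Longrightarrow> card E = d"
  using properly_connected by (simp add: properly_connected_def uniform_def)

lemma two_le_d: "E \<in> C \<Longrightarrow> 2 \<le> d"
  using hypergraph card_edge by (metis hypergraph_def)

lemma card_Diff_edges: "E \<in> C \<Longrightarrow> G \<in> C \<Longrightarrow> card (G - E) = d - card (E \<inter> G)"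
  using finite_edges card_edge by (simp add: card_Diff_subset_Int Int_commute)

lemma hdist_intersecting:
  "E \<in> C \<Longrightarrow> G \<in> C \<Longrightarrow> E \<inter> G \<noteq> {} \<Longrightarrow> hdist C E G = enat (card (G - E))"
  using properly_connected card_Diff_edges by (simp add: properly_connected_def)

lemma geodesic_exists:
  assumes "E \<in> C" "G \<in> C" "E \<inter> G \<noteq> {} \<or> hdist C E G \<le> enat d"
  obtains Es xs where "proper_chain C E G Es xs" "length xs = card (G - E)"
proof (rule geodesicE[OF _ finite_edges])
  show "hdist C E G \<le> enat (card (G - E))"
    using assms card_Diff_edges[of E G] hdist_intersecting[of E G] by fastforce
qed

lemma proper_chain_card_Diff_adjacent:
  assumes chain: "proper_chain C E G Es xs" and "i < length xs"
  shows "card (Es ! Suc i - Es ! i) = 1" "card (Es ! i - Es ! Suc i) = 1"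
proof -
  have "Es ! i \<in> C" "Es ! Suc i \<in> C"
    using assms proper_chain_nth_mem[OF chain] by simp_all
  moreover have "card (Es ! i \<inter> Es ! Suc i) = d - 1"
    using proper_chain_card_Int[OF assms] card_edge[OF \<open>Es ! Suc i \<in> C\<close>] by simp
  moreover have "2 \<le> d"
    using two_le_d \<open>Es ! i \<in> C\<close> .
  ultimately show "card (Es ! Suc i - Es ! i) = 1" "card (Es ! i - Es ! Suc i) = 1"
    using card_Diff_edges by (simp_all add: Int_commute)
qed

lemma geodesic_from_meets_nbhd:
  assumes chain: "proper_chain C F G Es xs"
    and "length xs = card (G - F)" "G - F \<noteq> {}"
  shows "(G - F) \<inter> nbhd C F \<noteq> {}"
proof (rule Diff_meets_nbhd)
  have "G \<in> C"
    using proper_chain_nth_mem[OF chain, of "length xs"] proper_chainD(3)[OF chain] by simp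
  then have "0 < length xs"
    using assms(2,3) finite_edges by (simp add: card_gt_0_iff)
  then have "1 \<le> length xs" by linarith
  then show "Es ! 1 \<in> C" "Es ! 1 \<subseteq> F \<union> G"
    using proper_chain_nth_mem[OF chain] geodesic_subset_Un[OF chain finite_edges assms(2)]
    by blast+
  show "card (Es ! 1 - F) = 1"
    using proper_chain_card_Diff_adjacent(1)[OF chain \<open>0 < length xs\<close>] proper_chainD(2)[OF chain]
    by simp
qed

lemma geodesic_to_meets_nbhd:
  assumes chain: "proper_chain C G F Es xs"
    and "length xs = card (F - G)" "F - G \<noteq> {}"
  shows "(G - F) \<inter> nbhd C F \<noteq> {}"
proof (rule Diff_meets_nbhd)
  let ?X = "Es ! (length xs - 1)"
  have "F \<in> C"
    using proper_chain_nth_mem[OF chain, of "length xs"] proper_chainD(3)[OF chain] by simp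
  then have "0 < length xs"
    using assms(2,3) finite_edges by (simp add: card_gt_0_iff)
  have "length xs - 1 \<le> length xs" by simp
  then show "?X \<in> C" "?X \<subseteq> F \<union> G"
    using proper_chain_nth_mem[OF chain] geodesic_subset_Un[OF chain finite_edges assms(2)]
    by blast+
  have "Suc (length xs - 1) = length xs"
    using \<open>0 < length xs\<close> by simp
  then show "card (?X - F) = 1"
    using proper_chain_card_Diff_adjacent(2)[OF chain, of "length xs - 1"]
      proper_chainD(3)[OF chain] \<open>0 < length xs\<close>
    by simp
qed

lemma Diff_meets_nbhd_if_intersecting:
  assumes "F \<in> C" "E \<in> C" "E \<inter> F \<noteq> {}" "E \<noteq> F"
  shows "(E - F) \<inter> nbhd C F \<noteq> {}"
proof -
  obtain Es xs where "proper_chain C F E Es xs" "length xs = card (E - F)"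
    using geodesic_exists[OF assms(1,2)] assms(3) by blast
  moreover have "E - F \<noteq> {}"
    using edges_incomparable[OF assms(2,1)] assms(4) by blast
  ultimately show ?thesis
    by (rule geodesic_from_meets_nbhd)
qed

lemma meets_nbhd_if_hdist_le:
  assumes "F \<in> C" "G \<in> C" "G \<inter> F = {}" "hdist C F G \<le> enat d \<or> hdist C G F \<le> enat d"
  shows "G \<inter> nbhd C F \<noteq> {}"
proof -
  have "F \<noteq> {}" "G \<noteq> {}"
    using assms(1,2) card_edge two_le_d by fastforce+
  have "G - F = G" "F - G = F"
    using assms(3) by blast+
  from assms(4) have "(G - F) \<inter> nbhd C F \<noteq> {}"
  proof
    assume "hdist C F G \<le> enat d"
    then obtain Es xs where "proper_chain C F G Es xs" "length xs = card (G - F)"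
      using geodesic_exists[OF assms(1,2)] by blast
    then show ?thesis
      by (rule geodesic_from_meets_nbhd) (simp add: \<open>G \<noteq> {}\<close> \<open>G - F = G\<close>)
  next
    assume "hdist C G F \<le> enat d"
    then obtain Es xs where "proper_chain C G F Es xs" "length xs = card (F - G)"
      using geodesic_exists[OF assms(2,1)] by blast
    then show ?thesis
      by (rule geodesic_to_meets_nbhd) (simp add: \<open>F \<noteq> {}\<close> \<open>F - G = F\<close>)
  qed
  then show ?thesis by blast
qed

text \<open>If E - F = {v} with v \<in> G, then F followed by a geodesic from E to G is a chain of length
  at most d.\<close>
lemma hdist_le_if_meets_nbhd:
  assumes "F \<in> C" "G \<in> C" "G \<inter> F = {}" "v \<in> G \<inter> nbhd C F"
  shows "hdist C F G \<le> enat d"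
proof -
  obtain E where E: "E \<in> C" "E - F = {v}"
    using assms(4) mem_nbhd_iff[of v C F] by blast
  have "v \<in> E \<inter> G"
    using E(2) assms(4) by blast
  then obtain Es ys where chain: "proper_chain C E G Es ys" and geo: "length ys = card (G - E)"
    using geodesic_exists[OF E(1) assms(2)] by blast
  have "finite (E \<inter> G)"
    using finite_edges E(1) by blast
  with \<open>v \<in> E \<inter> G\<close> have "card (E \<inter> G) > 0"
    by (subst card_gt_0_iff) blast
  then have short: "length ys \<le> d - 1"
    using geo card_Diff_edges[OF E(1) assms(2)] by simp
  have card_FE: "card (F \<inter> E) = d - 1"
    using card_Diff_edges[OF assms(1) E(1)] E(2) card_mono[of F "F \<inter> E"] finite_edges assms(1)
      card_edge[OF assms(1)] by simp
  then have "F \<inter> E \<noteq> {}"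
    using two_le_d[OF assms(1)] by auto
  then obtain x where x: "x \<in> F \<inter> E" "x \<notin> set ys"
    using proper_chain_vertex_avoidable[OF chain assms(3)] finite_edges assms(1) short card_FE
    by auto
  have "F \<notin> set Es"
    using geodesic_edges_contain[OF chain finite_edges geo \<open>v \<in> E \<inter> G\<close>] E(2) by blast
  then have "proper_chain C F G (F # Es) (x # ys)"
    using proper_chain_Cons[OF chain assms(1) _ x] card_FE card_edge E(1) assms(1,2) by simp
  then have "hdist C F G \<le> enat (length ys + 1)"
    using hdist_le_length by fastforce
  then show ?thesis
    using short two_le_d[OF assms(1)] by (simp add: order_trans)
qed

lemma hdist_le_iff_meets:
  assumes "F \<in> C" "G \<in> C"
  shows "hdist C F G \<le> enat d \<longleftrightarrow> G \<inter> (F \<union> nbhd C F) \<noteq> {}"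
proof
  assume "hdist C F G \<le> enat d"
  then show "G \<inter> (F \<union> nbhd C F) \<noteq> {}"
    using meets_nbhd_if_hdist_le[OF assms] by blast
next
  assume meets: "G \<inter> (F \<union> nbhd C F) \<noteq> {}"
  show "hdist C F G \<le> enat d"
  proof (cases "G \<inter> F = {}")
    case True
    with meets obtain v where "v \<in> G \<inter> nbhd C F" by blast
    with True show ?thesis
      using hdist_le_if_meets_nbhd[OF assms] by blast
  next
    case False
    then have "hdist C F G = enat (card (G - F))"
      using hdist_intersecting[OF assms] by blast
    then show ?thesis
      using card_Diff_edges[OF assms] by simp
  qed
qed

lemma colon_edge_avoids:
  assumes "F \<in> C" "H \<in> colon C F"
  shows "H \<in> C" "H \<inter> (F \<union> nbhd C F) = {}"
proof -
  obtain E where E: "E \<in> C" "E \<noteq> F" "H = E - F"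
    and minimal: "\<forall>E'\<in>C. E' \<noteq> F \<longrightarrow> E' - F \<subseteq> H \<longrightarrow> E' - F = H"
    and "2 \<le> card H"
    using assms(2) unfolding mem_colon_iff by (elim conjE bexE) (rule that)
  have "H \<inter> nbhd C F = {}"
  proof (rule ccontr)
    assume "H \<inter> nbhd C F \<noteq> {}"
    then obtain w where "w \<in> H" "w \<in> nbhd C F" by blast
    then obtain E' where E': "E' \<in> C" "E' - F = {w}"
      unfolding mem_nbhd_iff by blast
    then have "E' \<noteq> F" by auto
    moreover have "E' - F \<subseteq> H"
      using E'(2) \<open>w \<in> H\<close> by simp
    ultimately have "{w} = H"
      using minimal[rule_format, OF E'(1)] E'(2) by simp
    with \<open>2 \<le> card H\<close> show False by auto
  qed
  moreover have "E \<inter> F = {}"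
  proof -
    from \<open>H \<inter> nbhd C F = {}\<close> have "(E - F) \<inter> nbhd C F = {}"
      using E(3) by simp
    then show ?thesis
      using Diff_meets_nbhd_if_intersecting[OF assms(1) E(1) _ E(2)] by blast
  qed
  moreover from this have "H = E"
    using E(3) by blast
  ultimately show "H \<in> C" "H \<inter> (F \<union> nbhd C F) = {}"
    using E(1) by auto
qed

lemma avoiding_edge_mem_colon:
  assumes "F \<in> C" "G \<in> C" "G \<inter> (F \<union> nbhd C F) = {}"
  shows "G \<in> colon C F"
  unfolding mem_colon_iff
proof (intro conjI ballI impI)
  have "F \<noteq> {}"
    using assms(1) card_edge two_le_d by fastforce
  with assms(3) have "G \<noteq> F" "G = G - F"
    by blast+
  with assms(2) show "\<exists>E\<in>C. E \<noteq> F \<and> G = E - F"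
    by blast
  show "2 \<le> card G"
    using assms(2) card_edge two_le_d by simp
  fix E assume "E \<in> C" "E \<noteq> F" "E - F \<subseteq> G"
  then have "E \<inter> F = {}"
    using Diff_meets_nbhd_if_intersecting[OF assms(1)] assms(3) by blast
  with \<open>E - F \<subseteq> G\<close> have "E \<subseteq> G"
    by blast
  with \<open>E \<inter> F = {}\<close> show "E - F = G"
    using edges_incomparable[OF \<open>E \<in> C\<close> assms(2)] by blast
qed

lemma colon_eq_avoiding:
  assumes "F \<in> C"
  shows "colon C F = {G \<in> C. G \<inter> (F \<union> nbhd C F) = {}}"
  using colon_edge_avoids[OF assms] avoiding_edge_mem_colon[OF assms] by blast

lemma colon_eq_induced:
  assumes "F \<in> C"
  shows "colon C F = induced C (V - (F \<union> nbhd C F))"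
  using colon_eq_avoiding[OF assms] edge_subset unfolding induced_def by blast

lemma hdist_induced_le:
  assumes "E \<in> C" "G \<in> C" "E \<union> G \<subseteq> A" "hdist C E G \<le> enat d"
  shows "hdist (induced C A) E G \<le> enat d"
proof -
  obtain Es xs where chain: "proper_chain C E G Es xs" and geo: "length xs = card (G - E)"
    using geodesic_exists[OF assms(1,2)] assms(4) by blast
  have "set Es \<subseteq> induced C A"
  proof
    fix X assume "X \<in> set Es"
    then obtain i where "i < length Es" "Es ! i = X"
      by (auto simp: in_set_conv_nth)
    then have "i \<le> length xs"
      using proper_chainD(1)[OF chain] by simp
    then show "X \<in> induced C A"
      using \<open>Es ! i = X\<close> proper_chain_nth_mem[OF chain] geodesic_subset_Un[OF chain finite_edges geo]
        assms(3) unfolding induced_def by blast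
  qed
  then have "proper_chain (induced C A) E G Es xs"
    by (rule proper_chain_subfamily[OF chain])
  then have "hdist (induced C A) E G \<le> enat (length xs)"
    by (rule hdist_le_length)
  also have "length xs \<le> d"
    using geo card_Diff_edges[OF assms(1,2)] by simp
  finally show ?thesis by simp
qed

lemma pairwise_disjoint_t_insert:
  assumes "F \<in> C" "S \<subseteq> colon C F" "pairwise_disjoint_t (colon C F) (d + 1) S"
  shows "pairwise_disjoint_t C (d + 1) (insert F S)"
  unfolding pairwise_disjoint_t_def enat_add_one_le_iff
proof (intro ballI impI)
  have avoiding: "G \<in> C \<and> G \<inter> (F \<union> nbhd C F) = {}" if "G \<in> S" for G
    using that assms(2) colon_eq_avoiding[OF assms(1)] by blast
  fix E G assume "E \<in> insert F S" "G \<in> insert F S" "E \<noteq> G"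
  then consider "E = F" "G \<in> S" | "G = F" "E \<in> S" | "E \<in> S" "G \<in> S"
    by blast
  then show "\<not> hdist C E G \<le> enat d"
  proof cases
    case 1
    then show ?thesis
      using avoiding hdist_le_iff_meets[OF assms(1)] by blast
  next
    case 2
    then show ?thesis
      using avoiding meets_nbhd_if_hdist_le[OF assms(1)] by blast
  next
    case 3
    let ?A = "V - (F \<union> nbhd C F)"
    note colon_eq_induced[OF assms(1)]
    moreover have "\<not> hdist (colon C F) E G \<le> enat d"
      using assms(3) 3 \<open>E \<noteq> G\<close> unfolding pairwise_disjoint_t_def enat_add_one_le_iff by blast
    moreover have "E \<union> G \<subseteq> ?A"
      using 3 avoiding edge_subset by blast
    ultimately show ?thesis
      using hdist_induced_le avoiding 3 by metis
  qed
qed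

lemma cnum_colon_less:
  assumes "F \<in> C"
  shows "cnum (colon C F) d + 1 \<le> cnum C d"
proof -
  have "finite (colon C F)"
    using finite_C colon_eq_avoiding[OF assms] by simp
  then obtain S where S: "S \<subseteq> colon C F" "pairwise_disjoint_t (colon C F) (d + 1) S"
    "card S = cnum (colon C F) d"
    by (rule cnum_attained)
  have "F \<notin> S"
    using S(1) colon_eq_avoiding[OF assms] card_edge[OF assms] two_le_d[OF assms] by fastforce
  moreover have "finite S"
    using S(1) \<open>finite (colon C F)\<close> finite_subset by blast
  ultimately have "card (insert F S) = cnum (colon C F) d + 1"
    using S(3) by simp
  moreover have "insert F S \<subseteq> C"
    using S(1) assms colon_eq_avoiding[OF assms] by blast
  ultimately show ?thesis
    using card_le_cnum[OF finite_C _ pairwise_disjoint_t_insert[OF assms S(1,2)]] by simp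
qed

end

theorem theorem4p1:
  fixes V :: "'a set" and C :: "'a set set" and F :: "'a set" and d :: nat
  assumes "hypergraph V C" and "uniform C d" and "properly_connected C d" and "F \<in> C"
  shows "(\<forall>E\<in>C. E \<in> colon C F \<longleftrightarrow> hdist C F E \<ge> enat (d + 1))
    \<and> colon C F = induced C (V - (F \<union> nbhd C F))
    \<and> colon C F = {G \<in> C. hdist C F G \<ge> enat (d + 1)}
    \<and> cnum C d \<ge> cnum (colon C F) d + 1"
proof -
  interpret properly_connected_hypergraph V C d
    using assms(1,3) by unfold_locales
  have far_iff: "hdist C F G \<ge> enat (d + 1) \<longleftrightarrow> G \<inter> (F \<union> nbhd C F) = {}" if "G \<in> C" for G
    using hdist_le_iff_meets[OF assms(4) that] enat_add_one_le_iff by blast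
  have "colon C F = {G \<in> C. hdist C F G \<ge> enat (d + 1)}"
    using colon_eq_avoiding[OF assms(4)] far_iff by blast
  then show ?thesis
    using colon_eq_induced[OF assms(4)] cnum_colon_less[OF assms(4)] by blast
qed

end
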